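(* Let $T=(V,E,\rho,\ell)$ be a tree with $|\partial T|\ge2$ and let $(X_\gamma)_{\gamma\in\Gamma_T}$ be a $\mathbf{P}_t$-chain on $T$. For $j\in\mathcal{S}$ let $N_j$ be the number of leaves of $T$ in state $j$. Then for all $i,j\in\mathcal{S}$, $$\mathrm{var}_i(N_j)\le\frac14|\partial T|+2(q_i\vee1)\,\mathrm{Spr}(T)\,|\partial T|^2,$$ where $\mathrm{var}_i$ denotes variance under $\mathbb{P}^i$.
   Context: A tree $T=(V,E,\rho,\ell)$ is a finite rooted tree with positive edge lengths, viewed as a metric object with point set $\Gamma_T$ and leaf set $\partial T$. Markov process on countable $\mathcal{S}$ with transition matrices $\mathbf{P}_t=(p_{ij}(t))$ and stable conservative $Q$-matrix, $q_i=-q_{ii}=\sum_{j\ne i}q_{ij}<\infty$. A $\mathbf{P}_t$-chain on $T$: root state $X_\rho$, then along each edge $(u,v)$ run the chain from $X_u$ for time $\ell_{(u,v)}$, independently on outgoing edges given the branching state; $\mathbb{P}^i$ is the law with $X_\rho=i$. Spread: $\ell_{xy}$ is the length of the common part of the paths from $\rho$ to leaves $x$ and $y$, and $\mathrm{Spr}(T)=\frac{\sum_{x\ne y}(\ell_{xy}\wedge1)}{|\partial T|(|\partial T|-1)}$ (sum over ordered pairs of distinct leaves). *)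

theory Defs
  imports "HOL-Probability.Probability"
begin

text \<open>A finite rooted tree is given by a finite vertex set V, a root rho in V and a
parent map par (with par rho = rho); the edges are (par v, v) for v in V - {rho},
and len v > 0 is the length of the edge entering v.\<close>

definition anc :: "('v \<Rightarrow> 'v) \<Rightarrow> 'v \<Rightarrow> 'v set" where
  "anc par v = range (\<lambda>n. (par ^^ n) v)"

definition rooted_tree :: "'v set \<Rightarrow> ('v \<Rightarrow> 'v) \<Rightarrow> 'v \<Rightarrow> ('v \<Rightarrow> real) \<Rightarrow> bool" where
  "rooted_tree V par rho len \<longleftrightarrow>
     finite V \<and> rho \<in> V \<and> par rho = rho \<and> (\<forall>v\<in>V. par v \<in> V) \<and>
     (\<forall>v\<in>V. rho \<in> anc par v) \<and> (\<forall>v\<in>V - {rho}. len v > 0)"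

definition leaves :: "'v set \<Rightarrow> ('v \<Rightarrow> 'v) \<Rightarrow> 'v \<Rightarrow> 'v set" where
  "leaves V par rho = {v \<in> V. \<forall>w \<in> V - {rho}. par w \<noteq> v}"

definition shared_len :: "('v \<Rightarrow> 'v) \<Rightarrow> 'v \<Rightarrow> ('v \<Rightarrow> real) \<Rightarrow> 'v \<Rightarrow> 'v \<Rightarrow> real" where
  "shared_len par rho len x y = (\<Sum>w \<in> (anc par x \<inter> anc par y) - {rho}. len w)"

definition spread :: "'v set \<Rightarrow> ('v \<Rightarrow> 'v) \<Rightarrow> 'v \<Rightarrow> ('v \<Rightarrow> real) \<Rightarrow> real" where
  "spread V par rho len =
     (let L = leaves V par rho in
       (\<Sum>(x,y) \<in> {(x,y). x \<in> L \<and> y \<in> L \<and> x \<noteq> y}. min (shared_len par rho len x y) 1)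
       / (real (card L) * (real (card L) - 1)))"

definition transition_function :: "(real \<Rightarrow> 's \<Rightarrow> 's \<Rightarrow> real) \<Rightarrow> bool" where
  "transition_function P \<longleftrightarrow>
     (\<forall>t\<ge>0. \<forall>i j. P t i j \<ge> 0) \<and>
     (\<forall>t\<ge>0. \<forall>i. ((\<lambda>j. P t i j) has_sum 1) UNIV) \<and>
     (\<forall>i j. P 0 i j = (if i = j then 1 else 0)) \<and>
     (\<forall>s\<ge>0. \<forall>t\<ge>0. \<forall>i j. ((\<lambda>k. P s i k * P t k j) has_sum P (s + t) i j) UNIV) \<and>
     (\<forall>i j. ((\<lambda>t. P t i j) \<longlongrightarrow> (if i = j then 1 else 0)) (at_right 0))"

text \<open>Q is the (stable, conservative) Q-matrix of P: q_ij = p_ij'(0), finite,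
and sum over j ~= i of q_ij equals q_i = - q_ii.\<close>
definition has_stable_conservative_Q ::
    "(real \<Rightarrow> 's \<Rightarrow> 's \<Rightarrow> real) \<Rightarrow> ('s \<Rightarrow> 's \<Rightarrow> real) \<Rightarrow> bool" where
  "has_stable_conservative_Q P Q \<longleftrightarrow>
     (\<forall>i j. ((\<lambda>t. (P t i j - (if i = j then 1 else 0)) / t) \<longlongrightarrow> Q i j) (at_right 0)) \<and>
     (\<forall>i. ((\<lambda>j. Q i j) has_sum (- Q i i)) (UNIV - {i}))"

text \<open>X is a P_t-chain on the tree (restricted to its vertices) started from state i
at the root: the joint law of the vertex states is the product of transition
probabilities along the edges.\<close>
definition tree_chain ::
    "'w measure \<Rightarrow> 'v set \<Rightarrow> ('v \<Rightarrow> 'v) \<Rightarrow> 'v \<Rightarrow> ('v \<Rightarrow> real) \<Rightarrow>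
     (real \<Rightarrow> 's \<Rightarrow> 's \<Rightarrow> real) \<Rightarrow> 's \<Rightarrow> ('v \<Rightarrow> 'w \<Rightarrow> 's) \<Rightarrow> bool" where
  "tree_chain M V par rho len P i X \<longleftrightarrow>
     prob_space M \<and>
     (\<forall>v\<in>V. X v \<in> measurable M (count_space UNIV)) \<and>
     (\<forall>x :: 'v \<Rightarrow> 's.
        measure M {\<omega> \<in> space M. \<forall>v\<in>V. X v \<omega> = x v} =
        (if x rho = i then 1 else 0) * (\<Prod>v \<in> V - {rho}. P (len v) (x (par v)) (x v)))"

definition leaf_count :: "'v set \<Rightarrow> ('v \<Rightarrow> 'v) \<Rightarrow> 'v \<Rightarrow> ('v \<Rightarrow> 'w \<Rightarrow> 's) \<Rightarrow> 's \<Rightarrow> 'w \<Rightarrow> real" where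
  "leaf_count V par rho X j \<omega> = real (card {x \<in> leaves V par rho. X x \<omega> = j})"

end

theory Submission
  imports Defs
begin

text \<open>The variance of \<open>N\<^sub>j = \<Sum>\<^sub>x [X\<^sub>x = j]\<close> is the sum of the covariances of the leaf
  indicators. A diagonal term is \<open>p(1 - p) \<le> 1/4\<close>. For two leaves \<open>x \<noteq> y\<close>, the Markov
  property on the tree makes \<open>X\<^sub>x\<close> and \<open>X\<^sub>y\<close> conditionally independent given the event \<open>E\<close>
  that the chain sits in the root state \<open>i\<close> along the whole common root path of \<open>x\<close> and \<open>y\<close>;
  hence the covariance is at most \<open>2 (1 - P(E))\<close>. Subadditivity of \<open>t \<mapsto> 1 - p\<^sub>i\<^sub>i(t)\<close> gives
  \<open>1 - p\<^sub>i\<^sub>i(t) \<le> q\<^sub>i t\<close>, so \<open>1 - P(E) \<le> q\<^sub>i \<ell>\<^sub>x\<^sub>y\<close>. Summing over ordered pairs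
  of distinct leaves yields the spread.\<close>

section \<open>Ancestor-closed vertex sets\<close>

definition ancestor_closed :: "('v \<Rightarrow> 'v) \<Rightarrow> 'v \<Rightarrow> 'v set \<Rightarrow> bool" where
  "ancestor_closed par rho W \<longleftrightarrow> rho \<in> W \<and> (\<forall>v\<in>W. par v \<in> W)"

lemma anc_self: "v \<in> anc par v"
  unfolding anc_def by (metis funpow_0 rangeI)

lemma par_in_anc: "w \<in> anc par v \<Longrightarrow> par w \<in> anc par v"
  unfolding anc_def by (auto simp: image_iff) (metis comp_apply funpow.simps(2))

lemma funpow_par_in: "\<forall>v\<in>V. par v \<in> V \<Longrightarrow> u \<in> V \<Longrightarrow> (par ^^ n) u \<in> V"
  by (induction n) auto

lemma anc_subset:
  assumes "rooted_tree V par rho len" "u \<in> V"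
  shows "anc par u \<subseteq> V"
  using assms unfolding anc_def rooted_tree_def by (auto intro: funpow_par_in)

lemma ancestor_closed_anc:
  assumes "rooted_tree V par rho len" "u \<in> V"
  shows "ancestor_closed par rho (anc par u)"
  using assms unfolding ancestor_closed_def rooted_tree_def by (auto intro: par_in_anc)

lemma ancestor_closed_Un:
  "ancestor_closed par rho U \<Longrightarrow> ancestor_closed par rho U' \<Longrightarrow> ancestor_closed par rho (U \<union> U')"
  and ancestor_closed_Int:
  "ancestor_closed par rho U \<Longrightarrow> ancestor_closed par rho U' \<Longrightarrow> ancestor_closed par rho (U \<inter> U')"
  unfolding ancestor_closed_def by auto

text \<open>The first vertex outside \<open>W\<close> on the path from any \<open>u \<notin> W\<close> to the root is a child of \<open>W\<close>.\<close>

lemma ex_child_outside: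
  assumes tree: "rooted_tree V par rho len"
    and W: "ancestor_closed par rho W" and "u \<in> V" "u \<notin> W"
  obtains v where "v \<in> V" "v \<notin> W" "par v \<in> W"
proof -
  obtain m where "(par ^^ m) u = rho"
    using tree \<open>u \<in> V\<close> unfolding rooted_tree_def anc_def by auto
  define n where "n = (LEAST k. (par ^^ k) u \<in> W)"
  have n_in: "(par ^^ n) u \<in> W"
    unfolding n_def by (rule LeastI[of _ m]) (use \<open>(par ^^ m) u = rho\<close> W in \<open>simp add: ancestor_closed_def\<close>)
  then obtain k where k: "n = Suc k"
    using \<open>u \<notin> W\<close> by (cases n) auto
  have "(par ^^ k) u \<notin> W"
    using not_less_Least[of k "\<lambda>k. (par ^^ k) u \<in> W"] k n_def by auto
  moreover have "(par ^^ k) u \<in> V"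
    using tree \<open>u \<in> V\<close> unfolding rooted_tree_def by (auto intro: funpow_par_in)
  ultimately show thesis
    using n_in k by (intro that) auto
qed

section \<open>Transition functions\<close>

lemma has_sum_term_le:
  fixes f :: "'a \<Rightarrow> real"
  assumes "(f has_sum s) UNIV" "\<And>x. f x \<ge> 0"
  shows "f a \<le> s"
  using has_sum_mono_neutral[OF has_sum_finite[of "{a}" f] assms(1)] assms(2) by auto

lemma nn_integral_count_space_has_sum:
  fixes f :: "'a \<Rightarrow> real"
  assumes "(f has_sum s) A" "\<And>x. x \<in> A \<Longrightarrow> f x \<ge> 0"
  shows "(\<integral>\<^sup>+x. ennreal (f x) \<partial>count_space A) = ennreal s"
proof -
  have "(\<lambda>x. norm (f x)) summable_on A"
    using assms summable_on_cong[of A "\<lambda>x. norm (f x)" f] by (auto simp: summable_on_def)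
  then have abs: "Infinite_Set_Sum.abs_summable_on f A"
    using abs_summable_equivalent by blast
  have "(\<integral>\<^sup>+x. ennreal (f x) \<partial>count_space A) = ennreal (infsetsum f A)"
    using nn_integral_conv_infsetsum[OF abs assms(2)] by simp
  also have "infsetsum f A = s"
    using infsetsum_infsum[OF abs] infsumI[OF assms(1)] by simp
  finally show ?thesis .
qed

context
  fixes P :: "real \<Rightarrow> 's \<Rightarrow> 's \<Rightarrow> real"
  assumes tf: "transition_function P"
begin

lemma transition_nonneg: "t \<ge> 0 \<Longrightarrow> P t a b \<ge> 0"
  using tf unfolding transition_function_def by blast

lemma transition_le_1: "t \<ge> 0 \<Longrightarrow> P t a b \<le> 1"
  using tf unfolding transition_function_def by (intro has_sum_term_le[where f="P t a"]) auto

lemma transition_nn_integral: "t \<ge> 0 \<Longrightarrow> (\<integral>\<^sup>+b. ennreal (P t a b) \<partial>count_space UNIV) = 1"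
  using tf nn_integral_count_space_has_sum[where f="P t a" and s=1 and A=UNIV]
  unfolding transition_function_def by auto

text \<open>Chapman--Kolmogorov, keeping only the path that stays at \<open>a\<close>.\<close>

lemma transition_diag_mult_le:
  assumes "s \<ge> 0" "t \<ge> 0"
  shows "P s a a * P t a a \<le> P (s + t) a a"
  using tf assms unfolding transition_function_def
  by (intro has_sum_term_le[where f="\<lambda>k. P s a k * P t k a"])
     (auto intro!: mult_nonneg_nonneg transition_nonneg)

lemma transition_leave_subadditive:
  assumes "s \<ge> 0" "t \<ge> 0"
  shows "1 - P (s + t) a a \<le> (1 - P s a a) + (1 - P t a a)"
proof -
  have "0 \<le> (1 - P s a a) * (1 - P t a a)"
    using assms transition_le_1 by auto
  then show ?thesis
    using transition_diag_mult_le[OF assms, of a] by (simp add: algebra_simps)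
qed

lemma transition_leave_le_mult:
  assumes "h \<ge> 0"
  shows "1 - P (real n * h) a a \<le> real n * (1 - P h a a)"
proof (induction n)
  case 0
  then show ?case using tf unfolding transition_function_def by simp
next
  case (Suc n)
  have "1 - P (real (Suc n) * h) a a = 1 - P (real n * h + h) a a"
    by (simp add: algebra_simps)
  also have "\<dots> \<le> (1 - P (real n * h) a a) + (1 - P h a a)"
    using assms by (intro transition_leave_subadditive) auto
  finally show ?case using Suc by (simp add: algebra_simps)
qed

text \<open>Subadditivity turns the derivative \<open>Q a a\<close> at \<open>0\<close> into a global linear bound.\<close>

lemma transition_leave_le_rate:
  assumes hq: "has_stable_conservative_Q P Q" and t: "t > 0"
  shows "1 - P t a a \<le> - Q a a * t"
proof -
  have "((\<lambda>h. (P h a a - (if a = a then 1 else 0)) / h) \<longlongrightarrow> Q a a) (at_right 0)"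
    using hq unfolding has_stable_conservative_Q_def by blast
  then have lim: "((\<lambda>h. (P h a a - 1) / h) \<longlongrightarrow> Q a a) (at_right 0)"
    by simp
  have "filterlim (\<lambda>n. t / real n) (at_right 0) sequentially"
  proof (rule tendsto_imp_filterlim_at_right)
    show "((\<lambda>n. t / real n) \<longlongrightarrow> 0) sequentially"
      by (rule lim_const_over_n)
    show "\<forall>\<^sub>F n in sequentially. t / real n > 0"
      using t by (auto simp: eventually_sequentially intro!: exI[of _ 1])
  qed
  then have "(\<lambda>n. - t * ((P (t / real n) a a - 1) / (t / real n))) \<longlonglongrightarrow> - t * Q a a"
    by (intro tendsto_mult tendsto_const filterlim_compose[OF lim])
  then have "1 - P t a a \<le> - t * Q a a"
  proof (rule LIMSEQ_le_const)
    show "\<exists>N. \<forall>n\<ge>N. 1 - P t a a \<le> - t * ((P (t / real n) a a - 1) / (t / real n))"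
    proof (intro exI allI impI)
      fix n :: nat
      assume n: "n \<ge> 1"
      have "1 - P (real n * (t / real n)) a a \<le> real n * (1 - P (t / real n) a a)"
        using t by (intro transition_leave_le_mult) auto
      moreover have "real n * (t / real n) = t"
        using n by auto
      moreover have "- t * ((P (t / real n) a a - 1) / (t / real n)) = real n * (1 - P (t / real n) a a)"
        using n t by (simp add: field_simps)
      ultimately show "1 - P t a a \<le> - t * ((P (t / real n) a a - 1) / (t / real n))"
        by simp
    qed
  qed
  then show ?thesis
    by (simp add: algebra_simps)
qed

end

section \<open>Marginals of a chain on a tree\<close>

definition cylinder :: "'w measure \<Rightarrow> ('v \<Rightarrow> 'w \<Rightarrow> 's) \<Rightarrow> 'v set \<Rightarrow> ('v \<Rightarrow> 's) \<Rightarrow> 'w set" where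
  "cylinder M X W c = {\<omega> \<in> space M. \<forall>v\<in>W. X v \<omega> = c v}"

definition config_weight ::
    "'v set \<Rightarrow> ('v \<Rightarrow> 'v) \<Rightarrow> 'v \<Rightarrow> ('v \<Rightarrow> real) \<Rightarrow> (real \<Rightarrow> 's \<Rightarrow> 's \<Rightarrow> real) \<Rightarrow> 's \<Rightarrow> ('v \<Rightarrow> 's) \<Rightarrow> real" where
  "config_weight W par rho len P i c =
     (if c rho = i then 1 else 0) * (\<Prod>v\<in>W - {rho}. P (len v) (c (par v)) (c v))"

lemma cylinder_cong: "(\<And>v. v \<in> W \<Longrightarrow> c v = d v) \<Longrightarrow> cylinder M X W c = cylinder M X W d"
  unfolding cylinder_def by auto

lemma cylinder_in_sets:
  assumes "finite W" "\<forall>v\<in>W. X v \<in> measurable M (count_space UNIV)"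
  shows "cylinder M X W c \<in> sets M"
proof -
  have "{\<omega> \<in> space M. X v \<omega> = c v} \<in> sets M" if "v \<in> W" for v
  proof -
    have "{\<omega> \<in> space M. X v \<omega> = c v} = X v -` {c v} \<inter> space M"
      by auto
    then show ?thesis
      using assms that by (auto intro: measurable_sets)
  qed
  then show ?thesis
    unfolding cylinder_def using assms(1) by (rule sets.sets_Collect_finite_All)
qed

lemma tree_chain_state_in_sets:
  assumes "tree_chain M V par rho len P i X" "v \<in> V"
  shows "{\<omega> \<in> space M. X v \<omega> = s} \<in> sets M"
  using cylinder_in_sets[of "{v}" X M "\<lambda>_. s"] assms unfolding tree_chain_def cylinder_def by auto

lemma config_weight_nonneg:
  assumes "transition_function P" "\<forall>v\<in>W - {rho}. len v \<ge> 0"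
  shows "config_weight W par rho len P i c \<ge> 0"
  using assms unfolding config_weight_def by (auto intro!: prod_nonneg transition_nonneg[OF assms(1)])

lemma config_weight_cong:
  assumes "ancestor_closed par rho W" "\<And>v. v \<in> W \<Longrightarrow> c v = d v"
  shows "config_weight W par rho len P i c = config_weight W par rho len P i d"
  using assms unfolding config_weight_def ancestor_closed_def by (auto intro!: prod.cong)

lemma config_weight_insert:
  assumes "finite W" "ancestor_closed par rho W" "v \<notin> W" "par v \<in> W"
  shows "config_weight (insert v W) par rho len P i (c(v := s))
       = config_weight W par rho len P i c * P (len v) (c (par v)) s"
proof -
  let ?f = "\<lambda>c u. P (len u) (c (par u)) (c u)"
  have "rho \<noteq> v" "par v \<noteq> v" "insert v W - {rho} = insert v (W - {rho})"
    using assms unfolding ancestor_closed_def by auto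
  moreover have "(\<Prod>u\<in>W - {rho}. ?f (c(v := s)) u) = (\<Prod>u\<in>W - {rho}. ?f c u)"
    using assms unfolding ancestor_closed_def by (intro prod.cong) auto
  ultimately show ?thesis
    using assms unfolding config_weight_def by (simp add: ac_simps)
qed

lemma config_weight_Un_Int:
  assumes "finite U" "finite U'"
  shows "config_weight (U \<union> U') par rho len P i c * config_weight (U \<inter> U') par rho len P i c
       = config_weight U par rho len P i c * config_weight U' par rho len P i c"
proof -
  have "(U \<union> U') - {rho} = (U - {rho}) \<union> (U' - {rho})" "(U \<inter> U') - {rho} = (U - {rho}) \<inter> (U' - {rho})"
    by auto
  then show ?thesis
    using prod.union_inter[of "U - {rho}" "U' - {rho}" "\<lambda>v. P (len v) (c (par v)) (c v)"] assms
    unfolding config_weight_def by auto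
qed

text \<open>Summing out the state of a leaf of \<open>insert v W\<close> removes its transition factor,
  because the transition probabilities out of \<open>c (par v)\<close> sum to one.\<close>

lemma measure_cylinder_insert:
  fixes P :: "real \<Rightarrow> 's::countable \<Rightarrow> 's \<Rightarrow> real"
  assumes tree: "rooted_tree V par rho len" and tf: "transition_function P"
    and tc: "tree_chain M V par rho len P i X"
    and W: "W \<subseteq> V" "ancestor_closed par rho W" and v: "v \<in> V" "v \<notin> W" "par v \<in> W"
    and IH: "\<And>s. measure M (cylinder M X (insert v W) (c(v := s)))
                 = config_weight (insert v W) par rho len P i (c(v := s))"
  shows "measure M (cylinder M X W c) = config_weight W par rho len P i c"
proof -
  interpret prob_space M
    using tc unfolding tree_chain_def by blast
  have finW: "finite W"
    using W tree unfolding rooted_tree_def by (blast intro: finite_subset)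
  have len: "\<forall>u\<in>V - {rho}. len u \<ge> 0"
    using tree unfolding rooted_tree_def by (auto intro: less_imp_le)
  have "v \<noteq> rho"
    using v W unfolding ancestor_closed_def by auto
  then have len_v: "len v \<ge> 0"
    using len v by auto
  have weight_nonneg: "config_weight W par rho len P i c \<ge> 0"
    using len W by (intro config_weight_nonneg[OF tf]) auto
  have sets: "cylinder M X (insert v W) d \<in> sets M" for d
    using tc finW v W unfolding tree_chain_def by (intro cylinder_in_sets) auto
  have "cylinder M X W c = (\<Union>s. cylinder M X (insert v W) (c(v := s)))"
    using v unfolding cylinder_def by auto
  moreover have "disjoint_family (\<lambda>s. cylinder M X (insert v W) (c(v := s)))"
    unfolding disjoint_family_on_def cylinder_def by auto
  ultimately have "emeasure M (cylinder M X W c)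
      = (\<integral>\<^sup>+s. emeasure M (cylinder M X (insert v W) (c(v := s))) \<partial>count_space UNIV)"
    using sets by (simp add: emeasure_UN_countable)
  also have "\<dots> = (\<integral>\<^sup>+s. ennreal (config_weight W par rho len P i c) * ennreal (P (len v) (c (par v)) s)
                      \<partial>count_space UNIV)"
    using IH weight_nonneg transition_nonneg[OF tf len_v]
    by (intro nn_integral_cong)
      (simp add: emeasure_eq_measure config_weight_insert[OF finW W(2) v(2,3)] ennreal_mult)
  also have "\<dots> = ennreal (config_weight W par rho len P i c)"
    by (simp add: nn_integral_cmult transition_nn_integral[OF tf len_v])
  finally show ?thesis
    using weight_nonneg by (simp add: emeasure_eq_measure)
qed

lemma measure_cylinder:
  fixes P :: "real \<Rightarrow> 's::countable \<Rightarrow> 's \<Rightarrow> real"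
  assumes tree: "rooted_tree V par rho len" and tf: "transition_function P"
    and tc: "tree_chain M V par rho len P i X"
    and "W \<subseteq> V" "ancestor_closed par rho W"
  shows "measure M (cylinder M X W c) = config_weight W par rho len P i c"
  using assms(4,5)
proof (induction "card (V - W)" arbitrary: W c)
  case 0
  then have "W = V"
    using tree unfolding rooted_tree_def by auto
  then show ?case
    using tc unfolding tree_chain_def cylinder_def config_weight_def by auto
next
  case (Suc n)
  then obtain u where "u \<in> V" "u \<notin> W"
    by (metis Diff_eq_empty_iff card.empty nat.distinct(1) subsetI)
  then obtain v where v: "v \<in> V" "v \<notin> W" "par v \<in> W"
    using ex_child_outside[OF tree Suc.prems(2)] by blast
  have "card (V - insert v W) = n"
    using Suc.hyps(2) v tree unfolding rooted_tree_def by (simp add: card_Diff_subset)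
  moreover have "ancestor_closed par rho (insert v W)"
    using Suc.prems(2) v unfolding ancestor_closed_def by auto
  ultimately have "measure M (cylinder M X (insert v W) d) = config_weight (insert v W) par rho len P i d"
    for d
    using Suc.prems(1) v by (intro Suc.hyps(1)) auto
  then show ?case
    by (rule measure_cylinder_insert[OF tree tf tc Suc.prems v])
qed

text \<open>The Markov property of the chain: the configurations on two ancestor-closed sets
  are independent given the configuration on their intersection.\<close>

lemma measure_cylinder_Un_Int:
  fixes P :: "real \<Rightarrow> 's::countable \<Rightarrow> 's \<Rightarrow> real"
  assumes tree: "rooted_tree V par rho len" and tf: "transition_function P"
    and tc: "tree_chain M V par rho len P i X"
    and U: "U \<subseteq> V" "ancestor_closed par rho U" and U': "U' \<subseteq> V" "ancestor_closed par rho U'"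
  shows "measure M (cylinder M X (U \<union> U') c) * measure M (cylinder M X (U \<inter> U') c)
       = measure M (cylinder M X U c) * measure M (cylinder M X U' c)"
proof -
  have "finite U" "finite U'"
    using U U' tree unfolding rooted_tree_def by (auto intro: finite_subset)
  then show ?thesis
    using U U' config_weight_Un_Int
    by (simp add: measure_cylinder[OF tree tf tc] ancestor_closed_Un ancestor_closed_Int le_supI le_infI1)
qed

section \<open>Conditional independence given common ancestors\<close>

lemma emeasure_eq_nn_integral_cylinders:
  fixes X :: "'v \<Rightarrow> 'w \<Rightarrow> 's::countable"
  assumes "finite S" "\<forall>v\<in>S. X v \<in> measurable M (count_space UNIV)"
  shows "emeasure M {\<omega> \<in> space M. R (restrict (\<lambda>v. X v \<omega>) S)}
       = (\<integral>\<^sup>+c. emeasure M (cylinder M X S c) \<partial>count_space {c \<in> PiE S (\<lambda>_. UNIV). R c})"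
proof -
  let ?D = "{c \<in> PiE S (\<lambda>_. UNIV). R c}"
  have "{\<omega> \<in> space M. R (restrict (\<lambda>v. X v \<omega>) S)} = (\<Union>c\<in>?D. cylinder M X S c)"
  proof (intro equalityI subsetI)
    fix \<omega>
    assume "\<omega> \<in> {\<omega> \<in> space M. R (restrict (\<lambda>v. X v \<omega>) S)}"
    then show "\<omega> \<in> (\<Union>c\<in>?D. cylinder M X S c)"
      by (intro UN_I[of "restrict (\<lambda>v. X v \<omega>) S"]) (auto simp: cylinder_def)
  next
    fix \<omega>
    assume "\<omega> \<in> (\<Union>c\<in>?D. cylinder M X S c)"
    then obtain c where c: "c \<in> ?D" "\<omega> \<in> cylinder M X S c"
      by auto
    then have "restrict (\<lambda>v. X v \<omega>) S = c"
      unfolding cylinder_def by (auto simp: PiE_def extensional_def restrict_def)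
    then show "\<omega> \<in> {\<omega> \<in> space M. R (restrict (\<lambda>v. X v \<omega>) S)}"
      using c unfolding cylinder_def by auto
  qed
  moreover have "countable ?D"
    by (rule countable_subset[OF _ countable_PiE[OF assms(1)]]) auto
  moreover have "disjoint_family_on (cylinder M X S) ?D"
    unfolding disjoint_family_on_def cylinder_def
    by (auto simp: PiE_def extensional_def) (metis ext)
  ultimately show ?thesis
    using assms by (simp add: emeasure_UN_countable cylinder_in_sets)
qed

lemma nn_integral_count_space_Times:
  assumes "countable A" "countable B"
  shows "(\<integral>\<^sup>+p. f (fst p) * g (snd p) \<partial>count_space (A \<times> B))
       = (\<integral>\<^sup>+x. f x \<partial>count_space A) * (\<integral>\<^sup>+y. g y \<partial>count_space B)"
proof -
  interpret B: sigma_finite_measure "count_space B"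
    using assms(2) by (rule sigma_finite_measure_count_space_countable)
  have "(\<integral>\<^sup>+p. f (fst p) * g (snd p) \<partial>count_space (A \<times> B))
      = (\<integral>\<^sup>+p. f (fst p) * g (snd p) \<partial>(count_space A \<Otimes>\<^sub>M count_space B))"
    by (simp add: pair_measure_countable[OF assms])
  also have "\<dots> = (\<integral>\<^sup>+x. \<integral>\<^sup>+y. f x * g y \<partial>count_space B \<partial>count_space A)"
    by (subst B.nn_integral_fst[symmetric]) (auto simp: pair_measure_countable[OF assms])
  also have "\<dots> = (\<integral>\<^sup>+x. f x \<partial>count_space A) * (\<integral>\<^sup>+y. g y \<partial>count_space B)"
    by (simp add: nn_integral_cmult nn_integral_multc)
  finally show ?thesis .
qed

lemma bij_betw_glue_PiE:
  assumes agree: "\<And>a b v. Ra a \<Longrightarrow> Rb b \<Longrightarrow> v \<in> U \<inter> U' \<Longrightarrow> a v = b v"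
  shows "bij_betw (\<lambda>(a, b) v. if v \<in> U then a v else b v)
           ({a \<in> PiE U (\<lambda>_. UNIV). Ra a} \<times> {b \<in> PiE U' (\<lambda>_. UNIV). Rb b})
           {c \<in> PiE (U \<union> U') (\<lambda>_. UNIV). Ra (restrict c U) \<and> Rb (restrict c U')}"
proof (rule bij_betw_byWitness[where f'="\<lambda>c. (restrict c U, restrict c U')"])
  have restrict_glue: "restrict (\<lambda>v. if v \<in> U then a v else b v) U = a"
    "restrict (\<lambda>v. if v \<in> U then a v else b v) U' = b"
    if "a \<in> PiE U (\<lambda>_. UNIV)" "b \<in> PiE U' (\<lambda>_. UNIV)" "Ra a" "Rb b" for a b
    using that agree[of a b] by (auto simp: PiE_def extensional_def fun_eq_iff)
  then show "\<forall>p \<in> {a \<in> PiE U (\<lambda>_. UNIV). Ra a} \<times> {b \<in> PiE U' (\<lambda>_. UNIV). Rb b}.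
      (\<lambda>c. (restrict c U, restrict c U')) ((\<lambda>(a, b) v. if v \<in> U then a v else b v) p) = p"
    by auto
  show "(\<lambda>(a, b) v. if v \<in> U then a v else b v) `
      ({a \<in> PiE U (\<lambda>_. UNIV). Ra a} \<times> {b \<in> PiE U' (\<lambda>_. UNIV). Rb b})
      \<subseteq> {c \<in> PiE (U \<union> U') (\<lambda>_. UNIV). Ra (restrict c U) \<and> Rb (restrict c U')}"
    using restrict_glue by (auto simp: PiE_def extensional_def)
  show "\<forall>c \<in> {c \<in> PiE (U \<union> U') (\<lambda>_. UNIV). Ra (restrict c U) \<and> Rb (restrict c U')}.
      (\<lambda>(a, b) v. if v \<in> U then a v else b v) ((\<lambda>c. (restrict c U, restrict c U')) c) = c"
    by (auto simp: PiE_def extensional_def fun_eq_iff)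
  show "(\<lambda>c. (restrict c U, restrict c U')) `
      {c \<in> PiE (U \<union> U') (\<lambda>_. UNIV). Ra (restrict c U) \<and> Rb (restrict c U')}
      \<subseteq> {a \<in> PiE U (\<lambda>_. UNIV). Ra a} \<times> {b \<in> PiE U' (\<lambda>_. UNIV). Rb b}"
    by auto
qed

lemma nn_integral_count_space_glue:
  fixes f g :: "('a \<Rightarrow> 'b::countable) \<Rightarrow> ennreal"
  assumes "finite U" "finite U'"
    and agree: "\<And>a b v. Ra a \<Longrightarrow> Rb b \<Longrightarrow> v \<in> U \<inter> U' \<Longrightarrow> a v = b v"
  shows "(\<integral>\<^sup>+c. f (restrict c U) * g (restrict c U')
            \<partial>count_space {c \<in> PiE (U \<union> U') (\<lambda>_. UNIV). Ra (restrict c U) \<and> Rb (restrict c U')})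
       = (\<integral>\<^sup>+a. f a \<partial>count_space {a \<in> PiE U (\<lambda>_. UNIV). Ra a})
         * (\<integral>\<^sup>+b. g b \<partial>count_space {b \<in> PiE U' (\<lambda>_. UNIV). Rb b})"
proof -
  define Da where "Da = {a \<in> PiE U (\<lambda>_. UNIV). Ra a}"
  define Db where "Db = {b \<in> PiE U' (\<lambda>_. UNIV). Rb b}"
  define glue :: "('a \<Rightarrow> 'b) \<times> ('a \<Rightarrow> 'b) \<Rightarrow> 'a \<Rightarrow> 'b"
    where "glue = (\<lambda>(a, b) v. if v \<in> U then a v else b v)"
  have bij: "bij_betw glue (Da \<times> Db)
      {c \<in> PiE (U \<union> U') (\<lambda>_. UNIV). Ra (restrict c U) \<and> Rb (restrict c U')}"
    unfolding glue_def Da_def Db_def using agree by (rule bij_betw_glue_PiE)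
  have restrict_glue: "restrict (glue p) U = fst p" "restrict (glue p) U' = snd p"
    if "p \<in> Da \<times> Db" for p
    using that agree unfolding glue_def Da_def Db_def
    by (auto simp: PiE_def extensional_def fun_eq_iff split: prod.splits)
  have "countable Da" "countable Db"
    unfolding Da_def Db_def
    by (rule countable_subset[OF _ countable_PiE[OF assms(1)]]; auto)
      (rule countable_subset[OF _ countable_PiE[OF assms(2)]]; auto)
  have "(\<integral>\<^sup>+c. f (restrict c U) * g (restrict c U')
            \<partial>count_space {c \<in> PiE (U \<union> U') (\<lambda>_. UNIV). Ra (restrict c U) \<and> Rb (restrict c U')})
      = (\<integral>\<^sup>+p. f (restrict (glue p) U) * g (restrict (glue p) U') \<partial>count_space (Da \<times> Db))"
    by (rule nn_integral_bij_count_space[OF bij, symmetric])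
  also have "\<dots> = (\<integral>\<^sup>+p. f (fst p) * g (snd p) \<partial>count_space (Da \<times> Db))"
    using restrict_glue by (intro nn_integral_cong) auto
  also have "\<dots> = (\<integral>\<^sup>+a. f a \<partial>count_space Da) * (\<integral>\<^sup>+b. g b \<partial>count_space Db)"
    by (rule nn_integral_count_space_Times) fact+
  finally show ?thesis
    unfolding Da_def Db_def .
qed

lemma conditional_independence_cylinder:
  fixes P :: "real \<Rightarrow> 's::countable \<Rightarrow> 's \<Rightarrow> real" and X :: "'v \<Rightarrow> 'w \<Rightarrow> 's"
    and e :: "'v \<Rightarrow> 's" and Ra Rb :: "('v \<Rightarrow> 's) \<Rightarrow> bool"
  assumes tree: "rooted_tree V par rho len" and tf: "transition_function P"
    and tc: "tree_chain M V par rho len P i X"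
    and U: "U \<subseteq> V" "ancestor_closed par rho U" and U': "U' \<subseteq> V" "ancestor_closed par rho U'"
    and Ra: "\<And>a v. Ra a \<Longrightarrow> v \<in> U \<inter> U' \<Longrightarrow> a v = e v"
    and Rb: "\<And>b v. Rb b \<Longrightarrow> v \<in> U \<inter> U' \<Longrightarrow> b v = e v"
  defines "A \<equiv> {\<omega> \<in> space M. Ra (restrict (\<lambda>v. X v \<omega>) U)}"
    and "B \<equiv> {\<omega> \<in> space M. Rb (restrict (\<lambda>v. X v \<omega>) U')}"
  shows "emeasure M (A \<inter> B) * measure M (cylinder M X (U \<inter> U') e) = emeasure M A * emeasure M B"
proof -
  interpret prob_space M
    using tc unfolding tree_chain_def by blast
  have fin: "finite U" "finite U'"
    using U U' tree unfolding rooted_tree_def by (auto intro: finite_subset)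
  have meas: "\<forall>v\<in>S. X v \<in> measurable M (count_space UNIV)" if "S \<subseteq> V" for S
    using tc that unfolding tree_chain_def by auto
  define Dc where "Dc = {c \<in> PiE (U \<union> U') (\<lambda>_. UNIV). Ra (restrict c U) \<and> Rb (restrict c U')}"
  have "A \<inter> B = {\<omega> \<in> space M.
      (\<lambda>c. Ra (restrict c U) \<and> Rb (restrict c U')) (restrict (\<lambda>v. X v \<omega>) (U \<union> U'))}"
    unfolding A_def B_def by auto
  then have AB: "emeasure M (A \<inter> B) = (\<integral>\<^sup>+c. emeasure M (cylinder M X (U \<union> U') c) \<partial>count_space Dc)"
    unfolding Dc_def using fin U(1) U'(1)
    by (simp only:) (intro emeasure_eq_nn_integral_cylinders meas, auto)
  have markov: "emeasure M (cylinder M X (U \<union> U') c) * measure M (cylinder M X (U \<inter> U') e)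
      = emeasure M (cylinder M X U (restrict c U)) * emeasure M (cylinder M X U' (restrict c U'))"
    if "c \<in> Dc" for c
  proof -
    have "c v = e v" if "v \<in> U \<inter> U'" for v
      using Ra[of "restrict c U" v] \<open>c \<in> Dc\<close> that unfolding Dc_def by auto
    then have "cylinder M X (U \<inter> U') c = cylinder M X (U \<inter> U') e"
      "cylinder M X U (restrict c U) = cylinder M X U c"
      "cylinder M X U' (restrict c U') = cylinder M X U' c"
      by (auto intro!: cylinder_cong)
    then show ?thesis
      using measure_cylinder_Un_Int[OF tree tf tc U U', of c]
      by (simp add: emeasure_eq_measure flip: ennreal_mult)
  qed
  have "emeasure M (A \<inter> B) * measure M (cylinder M X (U \<inter> U') e)
      = (\<integral>\<^sup>+c. emeasure M (cylinder M X (U \<union> U') c) * measure M (cylinder M X (U \<inter> U') e)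
          \<partial>count_space Dc)"
    unfolding AB by (rule nn_integral_multc[symmetric]) auto
  also have "\<dots> = (\<integral>\<^sup>+c. emeasure M (cylinder M X U (restrict c U)) * emeasure M (cylinder M X U' (restrict c U'))
          \<partial>count_space Dc)"
    using markov by (intro nn_integral_cong) auto
  also have "\<dots> = (\<integral>\<^sup>+a. emeasure M (cylinder M X U a) \<partial>count_space {a \<in> PiE U (\<lambda>_. UNIV). Ra a})
      * (\<integral>\<^sup>+b. emeasure M (cylinder M X U' b) \<partial>count_space {b \<in> PiE U' (\<lambda>_. UNIV). Rb b})"
    unfolding Dc_def using fin Ra Rb
    by (intro nn_integral_count_space_glue[where f="\<lambda>a. emeasure M (cylinder M X U a)"
          and g="\<lambda>b. emeasure M (cylinder M X U' b)"]) auto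
  also have "\<dots> = emeasure M A * emeasure M B"
    unfolding A_def B_def using fin U(1) U'(1) by (simp add: emeasure_eq_nn_integral_cylinders meas)
  finally show ?thesis .
qed

lemma conditional_independence_given_cylinder:
  fixes P :: "real \<Rightarrow> 's::countable \<Rightarrow> 's \<Rightarrow> real" and X :: "'v \<Rightarrow> 'w \<Rightarrow> 's"
    and e :: "'v \<Rightarrow> 's" and x y :: 'v and j k :: 's
  assumes tree: "rooted_tree V par rho len" and tf: "transition_function P"
    and tc: "tree_chain M V par rho len P i X"
    and U: "U \<subseteq> V" "ancestor_closed par rho U" and U': "U' \<subseteq> V" "ancestor_closed par rho U'"
    and "x \<in> U" "y \<in> U'"
  defines "E \<equiv> cylinder M X (U \<inter> U') e"
    and "A \<equiv> {\<omega> \<in> space M. X x \<omega> = j}" and "B \<equiv> {\<omega> \<in> space M. X y \<omega> = k}"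
  shows "measure M (E \<inter> A \<inter> B) * measure M E = measure M (E \<inter> A) * measure M (E \<inter> B)"
proof -
  interpret prob_space M
    using tc unfolding tree_chain_def by blast
  define Ra where "Ra a \<longleftrightarrow> (\<forall>v\<in>U \<inter> U'. a v = e v) \<and> a x = j" for a :: "'v \<Rightarrow> 's"
  define Rb where "Rb b \<longleftrightarrow> (\<forall>v\<in>U \<inter> U'. b v = e v) \<and> b y = k" for b :: "'v \<Rightarrow> 's"
  have events: "E \<inter> A = {\<omega> \<in> space M. Ra (restrict (\<lambda>v. X v \<omega>) U)}"
    "E \<inter> B = {\<omega> \<in> space M. Rb (restrict (\<lambda>v. X v \<omega>) U')}"
    using \<open>x \<in> U\<close> \<open>y \<in> U'\<close> unfolding E_def A_def B_def Ra_def Rb_def cylinder_def by auto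
  have "E \<inter> A \<inter> B = (E \<inter> A) \<inter> (E \<inter> B)"
    by auto
  also have "emeasure M \<dots> * measure M E = emeasure M (E \<inter> A) * emeasure M (E \<inter> B)"
    unfolding events unfolding E_def
    by (rule conditional_independence_cylinder[OF tree tf tc U U', where Ra=Ra and Rb=Rb and e=e])
      (auto simp: Ra_def Rb_def)
  finally show ?thesis
    by (simp add: emeasure_eq_measure flip: ennreal_mult)
qed

section \<open>Covariance of two leaf indicators\<close>

text \<open>Independent given \<open>E\<close>, the events \<open>A\<close> and \<open>B\<close> can only be correlated through the
  complement of \<open>E\<close>.\<close>

lemma (in prob_space) covariance_le_of_conditional_independence:
  assumes "E \<in> events" "A \<in> events" "B \<in> events"
    and indep: "prob (E \<inter> A \<inter> B) * prob E = prob (E \<inter> A) * prob (E \<inter> B)"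
  shows "prob (A \<inter> B) - prob A * prob B \<le> 2 * (1 - prob E)"
proof -
  have "prob (A \<inter> B) \<le> prob ((E \<inter> A \<inter> B) \<union> (space M - E))"
    using assms by (intro finite_measure_mono) (auto dest: sets.sets_into_space)
  also have "\<dots> \<le> prob (E \<inter> A \<inter> B) + prob (space M - E)"
    using assms by (intro measure_Un_le) auto
  also have "prob (space M - E) = 1 - prob E"
    using assms(1) by (rule prob_compl)
  finally have "prob (A \<inter> B) \<le> prob (E \<inter> A \<inter> B) + (1 - prob E)" .
  moreover have "prob (E \<inter> A) * prob (E \<inter> B) \<le> prob A * prob B"
    using assms by (intro mult_mono finite_measure_mono) auto
  moreover have "prob (E \<inter> A \<inter> B) * (1 - prob E) \<le> 1 - prob E"
    by (intro mult_left_le_one_le) auto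
  ultimately show ?thesis
    using indep by (simp add: algebra_simps)
qed

lemma one_minus_prod_le_sum:
  fixes a :: "'a \<Rightarrow> real"
  assumes "finite S" "\<And>v. v \<in> S \<Longrightarrow> 0 \<le> a v \<and> a v \<le> 1"
  shows "1 - (\<Prod>v\<in>S. a v) \<le> (\<Sum>v\<in>S. 1 - a v)"
  using assms
proof (induction S rule: finite_induct)
  case empty
  then show ?case by simp
next
  case (insert x F)
  have "(\<Prod>v\<in>F. a v) \<le> 1" "a x \<le> 1"
    using insert by (auto intro!: prod_le_1)
  then have "0 \<le> (1 - a x) * (1 - (\<Prod>v\<in>F. a v))"
    by simp
  then have "1 - a x * (\<Prod>v\<in>F. a v) \<le> (1 - a x) + (1 - (\<Prod>v\<in>F. a v))"
    by (simp add: algebra_simps)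
  then show ?case
    using insert by simp
qed

lemma covariance_le_leave_common_path:
  fixes P :: "real \<Rightarrow> 's::countable \<Rightarrow> 's \<Rightarrow> real" and j :: 's
  assumes tree: "rooted_tree V par rho len" and tf: "transition_function P"
    and tc: "tree_chain M V par rho len P i X" and "x \<in> V" "y \<in> V"
  defines "F \<equiv> \<lambda>z. {\<omega> \<in> space M. X z \<omega> = j}"
    and "E \<equiv> cylinder M X (anc par x \<inter> anc par y) (\<lambda>_. i)"
  shows "measure M (F x \<inter> F y) - measure M (F x) * measure M (F y) \<le> 2 * (1 - measure M E)"
proof -
  interpret prob_space M
    using tc unfolding tree_chain_def by blast
  have anc: "anc par x \<subseteq> V" "anc par y \<subseteq> V"
    using anc_subset[OF tree \<open>x \<in> V\<close>] anc_subset[OF tree \<open>y \<in> V\<close>] .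
  have "E \<in> events"
    unfolding E_def using anc tree tc
    by (intro cylinder_in_sets) (auto simp: rooted_tree_def tree_chain_def intro: finite_subset)
  moreover have "F x \<in> events" "F y \<in> events"
    unfolding F_def using tree_chain_state_in_sets[OF tc] \<open>x \<in> V\<close> \<open>y \<in> V\<close> by auto
  moreover have "prob (E \<inter> F x \<inter> F y) * prob E = prob (E \<inter> F x) * prob (E \<inter> F y)"
    unfolding E_def F_def
    by (rule conditional_independence_given_cylinder[OF tree tf tc anc(1) ancestor_closed_anc[OF tree \<open>x \<in> V\<close>]
          anc(2) ancestor_closed_anc[OF tree \<open>y \<in> V\<close>] anc_self anc_self])
  ultimately show ?thesis
    by (rule covariance_le_of_conditional_independence)
qed

lemma leave_common_path_le_shared_len:
  fixes P :: "real \<Rightarrow> 's::countable \<Rightarrow> 's \<Rightarrow> real"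
  assumes tree: "rooted_tree V par rho len" and tf: "transition_function P"
    and hq: "has_stable_conservative_Q P Q" and tc: "tree_chain M V par rho len P i X"
    and "x \<in> V" "y \<in> V"
  shows "1 - measure M (cylinder M X (anc par x \<inter> anc par y) (\<lambda>_. i))
       \<le> - Q i i * shared_len par rho len x y"
proof -
  define S where "S = anc par x \<inter> anc par y - {rho}"
  have S: "S \<subseteq> V - {rho}" "finite S"
    using tree anc_subset[OF tree \<open>x \<in> V\<close>] unfolding S_def rooted_tree_def
    by (auto intro: finite_subset)
  have len: "len v > 0" if "v \<in> S" for v
    using tree S that unfolding rooted_tree_def by auto
  have closed: "anc par x \<inter> anc par y \<subseteq> V" "ancestor_closed par rho (anc par x \<inter> anc par y)"
    using anc_subset[OF tree \<open>x \<in> V\<close>]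
      ancestor_closed_Int[OF ancestor_closed_anc[OF tree \<open>x \<in> V\<close>] ancestor_closed_anc[OF tree \<open>y \<in> V\<close>]]
    by auto
  have "1 - measure M (cylinder M X (anc par x \<inter> anc par y) (\<lambda>_. i)) = 1 - (\<Prod>v\<in>S. P (len v) i i)"
    unfolding S_def measure_cylinder[OF tree tf tc closed] config_weight_def by simp
  also have "\<dots> \<le> (\<Sum>v\<in>S. 1 - P (len v) i i)"
    using S len transition_nonneg[OF tf] transition_le_1[OF tf]
    by (intro one_minus_prod_le_sum) (auto simp: less_imp_le)
  also have "\<dots> \<le> (\<Sum>v\<in>S. - Q i i * len v)"
    using len transition_leave_le_rate[OF tf hq] by (intro sum_mono) auto
  also have "\<dots> = - Q i i * shared_len par rho len x y"
    unfolding shared_len_def S_def by (simp add: sum_distrib_left)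
  finally show ?thesis .
qed

lemma shared_len_nonneg:
  assumes "rooted_tree V par rho len" "x \<in> V"
  shows "shared_len par rho len x y \<ge> 0"
  using assms anc_subset[OF assms] unfolding shared_len_def rooted_tree_def
  by (intro sum_nonneg) (auto intro: less_imp_le)

lemma covariance_le_shared_len:
  fixes P :: "real \<Rightarrow> 's::countable \<Rightarrow> 's \<Rightarrow> real" and j :: 's
  assumes tree: "rooted_tree V par rho len" and tf: "transition_function P"
    and hq: "has_stable_conservative_Q P Q" and tc: "tree_chain M V par rho len P i X"
    and "x \<in> V" "y \<in> V"
  defines "F \<equiv> \<lambda>z. {\<omega> \<in> space M. X z \<omega> = j}"
  shows "measure M (F x \<inter> F y) - measure M (F x) * measure M (F y)
       \<le> 2 * max (- Q i i) 1 * min (shared_len par rho len x y) 1"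
proof -
  interpret prob_space M
    using tc unfolding tree_chain_def by blast
  have "measure M (F x \<inter> F y) - measure M (F x) * measure M (F y) \<le> 1"
    using prob_le_1[of "F x \<inter> F y"] measure_nonneg[of M "F x"] measure_nonneg[of M "F y"]
    by (smt (verit) mult_nonneg_nonneg)
  moreover have "measure M (F x \<inter> F y) - measure M (F x) * measure M (F y)
      \<le> 2 * (1 - measure M (cylinder M X (anc par x \<inter> anc par y) (\<lambda>_. i)))"
    unfolding F_def by (rule covariance_le_leave_common_path[OF tree tf tc \<open>x \<in> V\<close> \<open>y \<in> V\<close>])
  moreover note leave_common_path_le_shared_len[OF tree tf hq tc \<open>x \<in> V\<close> \<open>y \<in> V\<close>]
  moreover have "- Q i i * shared_len par rho len x y \<le> max (- Q i i) 1 * shared_len par rho len x y"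
    using shared_len_nonneg[OF tree \<open>x \<in> V\<close>] by (intro mult_right_mono) auto
  ultimately show ?thesis
    by (cases "shared_len par rho len x y \<le> 1") (auto simp: min_def)
qed

section \<open>Variance of the leaf count\<close>

lemma (in prob_space) variance_sum_indicators:
  assumes "finite L" "\<And>x. x \<in> L \<Longrightarrow> F x \<in> events"
    and N: "\<And>\<omega>. \<omega> \<in> space M \<Longrightarrow> N \<omega> = (\<Sum>x\<in>L. indicator (F x) \<omega>)"
  shows "variance N = (\<Sum>x\<in>L. \<Sum>y\<in>L. prob (F x \<inter> F y) - prob (F x) * prob (F y))"
proof -
  have square: "(N \<omega>)\<^sup>2 = (\<Sum>x\<in>L. \<Sum>y\<in>L. indicator (F x \<inter> F y) \<omega>)" if "\<omega> \<in> space M" for \<omega>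
    by (simp add: N[OF that] power2_eq_square sum_product indicator_inter_arith)
  have int: "integrable M (indicator A :: 'a \<Rightarrow> real)" if "A \<in> events" for A
    using that by (simp add: emeasure_eq_measure)
  have "integrable M N"
    using assms int by (subst Bochner_Integration.integrable_cong[OF refl N]) auto
  moreover have "integrable M (\<lambda>\<omega>. (N \<omega>)\<^sup>2)"
    using assms int by (subst Bochner_Integration.integrable_cong[OF refl square]) auto
  ultimately have "variance N = expectation (\<lambda>\<omega>. (N \<omega>)\<^sup>2) - (expectation N)\<^sup>2"
    by (rule variance_eq)
  moreover have "expectation N = (\<Sum>x\<in>L. prob (F x))"
    using assms int by (subst Bochner_Integration.integral_cong[OF refl N]) auto
  moreover have "expectation (\<lambda>\<omega>. (N \<omega>)\<^sup>2) = (\<Sum>x\<in>L. \<Sum>y\<in>L. prob (F x \<inter> F y))"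
    using assms int by (subst Bochner_Integration.integral_cong[OF refl square]) auto
  ultimately show ?thesis
    by (simp only:) (simp add: power2_eq_square sum_product sum_subtractf)
qed

lemma variance_leaf_count:
  fixes X :: "'v \<Rightarrow> 'w \<Rightarrow> 's" and j :: 's
  assumes tree: "rooted_tree V par rho len" and tc: "tree_chain M V par rho len P i X"
  defines "F \<equiv> \<lambda>z. {\<omega> \<in> space M. X z \<omega> = j}"
  shows "prob_space.variance M (leaf_count V par rho X j)
       = (\<Sum>x\<in>leaves V par rho. \<Sum>y\<in>leaves V par rho.
            measure M (F x \<inter> F y) - measure M (F x) * measure M (F y))"
proof -
  interpret prob_space M
    using tc unfolding tree_chain_def by blast
  have "leaves V par rho \<subseteq> V" "finite V"
    using tree unfolding leaves_def rooted_tree_def by auto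
  then have L: "finite (leaves V par rho)"
    by (rule finite_subset)
  show ?thesis
  proof (rule variance_sum_indicators[OF L])
    show "F x \<in> events" if "x \<in> leaves V par rho" for x
      unfolding F_def using tc that \<open>leaves V par rho \<subseteq> V\<close> by (blast intro: tree_chain_state_in_sets)
    show "leaf_count V par rho X j \<omega> = (\<Sum>x\<in>leaves V par rho. indicator (F x) \<omega>)"
      if "\<omega> \<in> space M" for \<omega>
      using that L unfolding leaf_count_def F_def by (simp add: indicator_def sum.If_cases Int_def conj_commute)
  qed
qed

lemma sum_min_shared_len_eq_spread:
  assumes "card (leaves V par rho) \<ge> 2"
  defines "L \<equiv> leaves V par rho"
  shows "(\<Sum>x\<in>L. \<Sum>y\<in>L - {x}. min (shared_len par rho len x y) 1)
       = spread V par rho len * (real (card L) * (real (card L) - 1))"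
proof -
  have "finite L" "real (card L) * (real (card L) - 1) \<noteq> 0"
    using assms card.infinite by fastforce+
  moreover have "{(x, y). x \<in> L \<and> y \<in> L \<and> x \<noteq> y} = Sigma L (\<lambda>x. L - {x})"
    by auto
  ultimately show ?thesis
    unfolding spread_def Let_def L_def[symmetric] by (simp add: sum.Sigma)
qed

lemma spread_nonneg:
  assumes "rooted_tree V par rho len"
  shows "spread V par rho len \<ge> 0"
proof -
  have "leaves V par rho \<subseteq> V"
    unfolding leaves_def by auto
  moreover have "real n * (real n - 1) \<ge> 0" for n :: nat
    by (cases n) auto
  ultimately show ?thesis
    using assms unfolding spread_def Let_def
    by (intro divide_nonneg_nonneg sum_nonneg) (auto simp: shared_len_nonneg)
qed

theorem mainTheorem8:
  fixes V :: "'v set" and par :: "'v \<Rightarrow> 'v" and rho :: 'v and len :: "'v \<Rightarrow> real"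
    and P :: "real \<Rightarrow> 's::countable \<Rightarrow> 's \<Rightarrow> real" and Q :: "'s \<Rightarrow> 's \<Rightarrow> real"
    and M :: "'w measure" and X :: "'v \<Rightarrow> 'w \<Rightarrow> 's" and i j :: 's
  assumes "rooted_tree V par rho len"
    and "card (leaves V par rho) \<ge> 2"
    and "transition_function P"
    and "has_stable_conservative_Q P Q"
    and "tree_chain M V par rho len P i X"
  shows "prob_space.variance M (leaf_count V par rho X j)
           \<le> real (card (leaves V par rho)) / 4
             + 2 * max (- Q i i) 1 * spread V par rho len * real (card (leaves V par rho)) ^ 2"
proof -
  interpret prob_space M
    using assms(5) unfolding tree_chain_def by blast
  define L where "L = leaves V par rho"
  define F where "F = (\<lambda>z. {\<omega> \<in> space M. X z \<omega> = j})"
  define cov where "cov x y = prob (F x \<inter> F y) - prob (F x) * prob (F y)" for x y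
  define K where "K = max (- Q i i) 1"
  have L: "finite L" "L \<subseteq> V"
    using assms(2) unfolding L_def leaves_def by (auto intro: card_ge_0_finite)
  have diag: "cov x x \<le> 1 / 4" for x
    using zero_le_power2[of "prob (F x) - 1 / 2"] unfolding cov_def
    by (simp add: power2_eq_square algebra_simps)
  have off: "cov x y \<le> 2 * K * min (shared_len par rho len x y) 1" if "x \<in> L" "y \<in> L" for x y
    unfolding cov_def F_def K_def using that L(2) by (intro covariance_le_shared_len[OF assms(1,3-5)]) auto
  have "prob_space.variance M (leaf_count V par rho X j) = (\<Sum>x\<in>L. \<Sum>y\<in>L. cov x y)"
    unfolding cov_def F_def L_def by (rule variance_leaf_count[OF assms(1,5)])
  also have "\<dots> = (\<Sum>x\<in>L. cov x x + (\<Sum>y\<in>L - {x}. cov x y))"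
    using L by (simp add: sum.remove)
  also have "\<dots> \<le> (\<Sum>x\<in>L. 1 / 4 + (\<Sum>y\<in>L - {x}. 2 * K * min (shared_len par rho len x y) 1))"
    using diag off by (intro sum_mono add_mono) auto
  also have "\<dots> = real (card L) / 4 + 2 * K * spread V par rho len * (real (card L) * (real (card L) - 1))"
    using sum_min_shared_len_eq_spread[OF assms(2)] unfolding L_def
    by (simp add: sum.distrib sum_distrib_left[symmetric])
  also have "\<dots> \<le> real (card L) / 4 + 2 * K * spread V par rho len * real (card L) ^ 2"
    using spread_nonneg[OF assms(1)]
    by (intro add_left_mono mult_left_mono) (auto simp: K_def power2_eq_square algebra_simps)
  finally show ?thesis
    unfolding K_def L_def .
qed

end
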